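(* Let $n\ge 2$, inputs $s_j\in\mathbb{Z}_{c_j}$, outputs in $\mathbb{Z}_d$ with $d$ prime, and let $f$ be a function that is not bipartite linear. Then the vertex $p(k|\mathbf{s})=\delta^k_{f(\mathbf{s})}$ of $\mathcal{P}$ is produced by exactly one non-signalling distribution, and this distribution is a vertex of the non-signalling polytope $\mathcal{NS}$.
   Context: Correlator of $p(\mathbf{m}|\mathbf{s})$: $p(k|\mathbf{s})=\sum_{\mathbf{m}:[\sum_j m_j]_d=k}p(\mathbf{m}|\mathbf{s})$; a distribution "produces" a correlator if this holds. $\mathcal{P}$ is the polytope of all correlator families. Non-signalling: for every subset $\mathcal{J}$ and inputs $\mathbf{s},\mathbf{s}'$ agreeing outside $\mathcal{J}$, $\sum_{(m_j)_{j\in\mathcal{J}}}p(\mathbf{m}|\mathbf{s})=\sum_{(m_j)_{j\in\mathcal{J}}}p(\mathbf{m}|\mathbf{s}')$; $\mathcal{NS}$ is the polytope of all non-signalling conditional distributions. A function $f$ is bipartite linear if for some nonempty proper $\mathcal{J}\subset\{1,\dots,n\}$ there are functions $f^1$ of $(s_j)_{j\in\mathcal{J}}$ and $f^2$ of $(s_j)_{j\notin\mathcal{J}}$ into $\mathbb{Z}_d$ with $f=[f^1+f^2]_d$. *)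

theory Defs
  imports Complex_Main "HOL-Computational_Algebra.Primes"
begin

text \<open>An input tuple s is a function nat => nat with
  s j < c j for j < n and s j = 0 for j >= n (canonical extension). A conditional distribution
  p(m|s) is a function P :: (nat => nat) => (nat => nat) => real, P s m = p(m|s).\<close>

definition inputs :: "nat \<Rightarrow> (nat \<Rightarrow> nat) \<Rightarrow> (nat \<Rightarrow> nat) set" where
  "inputs n c = {s. (\<forall>j<n. s j < c j) \<and> (\<forall>j\<ge>n. s j = 0)}"

definition outputs :: "nat \<Rightarrow> nat \<Rightarrow> (nat \<Rightarrow> nat) set" where
  "outputs n d = {m. (\<forall>j<n. m j < d) \<and> (\<forall>j\<ge>n. m j = 0)}"

definition cond_dist ::
  "nat \<Rightarrow> (nat \<Rightarrow> nat) \<Rightarrow> nat \<Rightarrow> ((nat \<Rightarrow> nat) \<Rightarrow> (nat \<Rightarrow> nat) \<Rightarrow> real) \<Rightarrow> bool" where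
  "cond_dist n c d P \<longleftrightarrow>
     (\<forall>s m. P s m \<ge> 0) \<and>
     (\<forall>s m. s \<notin> inputs n c \<or> m \<notin> outputs n d \<longrightarrow> P s m = 0) \<and>
     (\<forall>s\<in>inputs n c. (\<Sum>m\<in>outputs n d. P s m) = 1)"

definition non_signalling ::
  "nat \<Rightarrow> (nat \<Rightarrow> nat) \<Rightarrow> nat \<Rightarrow> ((nat \<Rightarrow> nat) \<Rightarrow> (nat \<Rightarrow> nat) \<Rightarrow> real) \<Rightarrow> bool" where
  "non_signalling n c d P \<longleftrightarrow>
     (\<forall>J. J \<subseteq> {..<n} \<longrightarrow>
       (\<forall>s\<in>inputs n c. \<forall>s'\<in>inputs n c. (\<forall>j<n. j \<notin> J \<longrightarrow> s j = s' j) \<longrightarrow>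
         (\<forall>m0\<in>outputs n d.
            (\<Sum>m\<in>{m\<in>outputs n d. \<forall>j<n. j \<notin> J \<longrightarrow> m j = m0 j}. P s m) =
            (\<Sum>m\<in>{m\<in>outputs n d. \<forall>j<n. j \<notin> J \<longrightarrow> m j = m0 j}. P s' m))))"

definition NS :: "nat \<Rightarrow> (nat \<Rightarrow> nat) \<Rightarrow> nat \<Rightarrow> ((nat \<Rightarrow> nat) \<Rightarrow> (nat \<Rightarrow> nat) \<Rightarrow> real) set" where
  "NS n c d = {P. cond_dist n c d P \<and> non_signalling n c d P}"

definition correlator ::
  "nat \<Rightarrow> nat \<Rightarrow> ((nat \<Rightarrow> nat) \<Rightarrow> (nat \<Rightarrow> nat) \<Rightarrow> real) \<Rightarrow> (nat \<Rightarrow> nat) \<Rightarrow> nat \<Rightarrow> real" where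
  "correlator n d P s k = (\<Sum>m\<in>{m\<in>outputs n d. (\<Sum>j<n. m j) mod d = k}. P s m)"

definition produces_delta ::
  "nat \<Rightarrow> (nat \<Rightarrow> nat) \<Rightarrow> nat \<Rightarrow> ((nat \<Rightarrow> nat) \<Rightarrow> nat) \<Rightarrow>
   ((nat \<Rightarrow> nat) \<Rightarrow> (nat \<Rightarrow> nat) \<Rightarrow> real) \<Rightarrow> bool" where
  "produces_delta n c d f P \<longleftrightarrow>
     (\<forall>s\<in>inputs n c. \<forall>k<d. correlator n d P s k = (if k = f s then 1 else 0))"

definition vertex_of ::
  "((nat \<Rightarrow> nat) \<Rightarrow> (nat \<Rightarrow> nat) \<Rightarrow> real) \<Rightarrow> ((nat \<Rightarrow> nat) \<Rightarrow> (nat \<Rightarrow> nat) \<Rightarrow> real) set \<Rightarrow> bool" where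
  "vertex_of P S \<longleftrightarrow> P \<in> S \<and>
     (\<forall>Q\<in>S. \<forall>R\<in>S. \<forall>t::real. 0 < t \<and> t < 1 \<and> P = (\<lambda>s m. t * Q s m + (1 - t) * R s m)
        \<longrightarrow> Q = R)"

definition bipartite_linear ::
  "nat \<Rightarrow> (nat \<Rightarrow> nat) \<Rightarrow> nat \<Rightarrow> ((nat \<Rightarrow> nat) \<Rightarrow> nat) \<Rightarrow> bool" where
  "bipartite_linear n c d f \<longleftrightarrow>
     (\<exists>J. J \<noteq> {} \<and> J \<subset> {..<n} \<and>
       (\<exists>f1 f2 :: (nat \<Rightarrow> nat) \<Rightarrow> nat.
          (\<forall>s\<in>inputs n c. f1 s < d \<and> f2 s < d) \<and>
          (\<forall>s\<in>inputs n c. \<forall>s'\<in>inputs n c. (\<forall>j\<in>J. s j = s' j) \<longrightarrow> f1 s = f1 s') \<and>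
          (\<forall>s\<in>inputs n c. \<forall>s'\<in>inputs n c. (\<forall>j<n. j \<notin> J \<longrightarrow> s j = s' j) \<longrightarrow> f2 s = f2 s') \<and>
          (\<forall>s\<in>inputs n c. f s = (f1 s + f2 s) mod d)))"

end

theory Submission
  imports Defs "HOL-Library.FuncSet"
begin

(* Let Q be non-signalling with correlator \<delta>(k, f s). For weights a, consider the distribution
   of the linear form a\<cdot>m mod d under Q(\<cdot>|s). Summing Pr[a\<cdot>m = a\<cdot>m0] over all weight vectors
   counts m0 exactly d^n times and every other output d^(n-1) times, so these distributions
   determine Q. Constant weights give a multiple of the output sum, which is f s on the
   support. For other weights, using \<Sum>m = f s the weight of any party j can be moved into
   an offset, and non-signalling in j then shows that changing s_j translates the distribution
   by a_j (f s' - f s). Comparing the two ways round a square of inputs, a non-uniform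
   distribution is invariant under translation by (a_j - a_i) times the mixed difference of f;
   as d is prime, f then splits across the parties with a_j = a_0 mod d, i.e. it is
   bipartite linear. So if f is not, every non-constant form is uniform, which forces
   Q(m|s) = d^(1-n) on the support. Conversely this distribution is non-signalling because the
   output sum is equidistributed on every cylinder of outputs, and it is a vertex because every
   component of a convex decomposition produces the same deterministic correlator. *)

lemma periodic_shift_invariant_const:
  fixes g :: "int \<Rightarrow> 'b" and q cc :: int
  assumes cop: "coprime cc q"
    and periodic: "\<And>k. g (k mod q) = g k" and shift: "\<And>k. g (k + cc) = g k"
  shows "g k = g 0"
proof -
  have multiple: "g (k + y * cc) = g k" for y
  proof (induction y rule: int_induct[where k = 0])
    case (step1 i)
    then show ?case using shift[of "k + i * cc"] by (simp add: algebra_simps)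
  next
    case (step2 i)
    then show ?case using shift[of "k + (i - 1) * cc"] by (simp add: algebra_simps)
  qed simp
  obtain u v where uv: "u * cc + v * q = 1"
    using bezout_int[of cc q] cop by (auto simp: coprime_iff_gcd_eq_1)
  have "g k = g (k + (- k * u) * cc)" by (rule multiple[symmetric])
  also have "k + (- k * u) * cc = (k * v) * q"
  proof -
    have "k = k * (u * cc + v * q)" using uv by simp
    then show ?thesis by (simp add: algebra_simps)
  qed
  also have "g \<dots> = g 0" using periodic[of "(k * v) * q"] by simp
  finally show ?thesis .
qed

lemma card_residue_fibre_eq:
  fixes A :: "'a set" and \<sigma> :: "'a \<Rightarrow> 'a" and w :: "'a \<Rightarrow> int" and q cc :: int
  assumes fin: "finite A" and into: "\<sigma> ` A \<subseteq> A" and inj: "inj_on \<sigma> A"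
    and w_shift: "\<And>x. x \<in> A \<Longrightarrow> w (\<sigma> x) mod q = (w x + cc) mod q"
    and cop: "coprime cc q"
  shows "card {x\<in>A. w x mod q = k mod q} = card {x\<in>A. w x mod q = 0}"
proof -
  define g where "g k = card {x\<in>A. w x mod q = k mod q}" for k
  have onto: "\<sigma> ` A = A" using endo_inj_surj[OF fin into inj] .
  have "g (k + cc) = g k" for k
  proof -
    have image: "\<sigma> ` {x\<in>A. w x mod q = k mod q} = {x\<in>A. w x mod q = (k + cc) mod q}"
    proof (intro equalityI subsetI)
      fix y assume "y \<in> \<sigma> ` {x\<in>A. w x mod q = k mod q}"
      then obtain x where "x \<in> A" "w x mod q = k mod q" "y = \<sigma> x" by auto
      moreover have "w (\<sigma> x) mod q = (k + cc) mod q"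
        using w_shift[OF \<open>x \<in> A\<close>] mod_add_cong[OF \<open>w x mod q = k mod q\<close> refl, of cc] by simp
      ultimately show "y \<in> {x\<in>A. w x mod q = (k + cc) mod q}" using into by auto
    next
      fix y assume y: "y \<in> {x\<in>A. w x mod q = (k + cc) mod q}"
      then have "y \<in> \<sigma> ` A" using onto by simp
      then obtain x where x: "x \<in> A" "y = \<sigma> x" by auto
      then have "(w x + cc) mod q = (k + cc) mod q" using w_shift y by auto
      then have "w x mod q = k mod q" using mod_diff_cong[of _ q _ cc cc] by fastforce
      then show "y \<in> \<sigma> ` {x\<in>A. w x mod q = k mod q}" using x by auto
    qed
    have "inj_on \<sigma> {x\<in>A. w x mod q = k mod q}" by (rule inj_on_subset[OF inj]) auto
    then show ?thesis unfolding g_def image[symmetric] by (rule card_image)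
  qed
  then have "g k = g 0" by (intro periodic_shift_invariant_const[OF cop]) (simp_all add: g_def)
  then show ?thesis by (simp add: g_def)
qed

lemma card_residue_fibre_uniform:
  fixes A :: "'a set" and \<sigma> :: "'a \<Rightarrow> 'a" and w :: "'a \<Rightarrow> int" and d :: nat and cc :: int
  assumes fin: "finite A" and into: "\<sigma> ` A \<subseteq> A" and inj: "inj_on \<sigma> A"
    and w_shift: "\<And>x. x \<in> A \<Longrightarrow> w (\<sigma> x) mod int d = (w x + cc) mod int d"
    and cop: "coprime cc (int d)" and d_pos: "d > 0"
  shows "d * card {x\<in>A. w x mod int d = k mod int d} = card A"
proof -
  let ?fibre = "\<lambda>k. {x\<in>A. w x mod int d = k mod int d}"
  have cover: "A = (\<Union>k<d. ?fibre (int k))"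
  proof (intro equalityI subsetI)
    fix x assume "x \<in> A"
    moreover have "nat (w x mod int d) < d" "int (nat (w x mod int d)) mod int d = w x mod int d"
      using d_pos by (simp_all add: nat_less_iff)
    ultimately show "x \<in> (\<Union>k<d. ?fibre (int k))" by (intro UN_I[of "nat (w x mod int d)"]) auto
  qed auto
  have "card (\<Union>k<d. ?fibre (int k)) = (\<Sum>k<d. card (?fibre (int k)))"
    by (rule card_UN_disjoint) (use fin in auto)
  then have "card A = (\<Sum>k<d. card (?fibre (int k)))"
    by (simp only: cover[symmetric])
  also have "\<dots> = (\<Sum>j<d. card (?fibre k))"
    by (intro sum.cong refl) (simp only: card_residue_fibre_eq[where \<sigma> = \<sigma> and w = w and q = "int d",
          OF fin into inj w_shift cop])
  finally show ?thesis by simp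
qed

lemma outputs_eq_PiE:
  "outputs n d = (\<lambda>g i. if i < n then g i else 0) ` (PiE {..<n} (\<lambda>_. {..<d}))"
proof (intro equalityI subsetI)
  fix m assume m: "m \<in> outputs n d"
  then have "m = (\<lambda>i. if i < n then restrict m {..<n} i else 0)"
    unfolding outputs_def by auto
  moreover have "restrict m {..<n} \<in> PiE {..<n} (\<lambda>_. {..<d})"
    using m unfolding outputs_def by auto
  ultimately show "m \<in> (\<lambda>g i. if i < n then g i else 0) ` (PiE {..<n} (\<lambda>_. {..<d}))" by blast
qed (auto simp: outputs_def PiE_def Pi_def)

lemma card_outputs: "card (outputs n d) = d ^ n"
proof -
  have "inj_on (\<lambda>g i. if i < n then g i else (0::nat)) (PiE {..<n} (\<lambda>_. {..<d}))"
  proof (rule inj_onI)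
    fix g h assume "g \<in> PiE {..<n} (\<lambda>_. {..<d})" "h \<in> PiE {..<n} (\<lambda>_. {..<d})"
      and "(\<lambda>i. if i < n then g i else (0::nat)) = (\<lambda>i. if i < n then h i else 0)"
    then show "g = h" by (metis (mono_tags, lifting) PiE_ext lessThan_iff)
  qed
  then show ?thesis by (simp add: outputs_eq_PiE card_image card_PiE)
qed

lemma finite_outputs: "d > 0 \<Longrightarrow> finite (outputs n d)"
  using card_outputs[of n d] by (metis card.infinite power_not_zero zero_less_iff_neq_zero)

lemma output_eq_constant:
  assumes "m \<in> outputs n d" "\<forall>i<n. m i = m 0"
  shows "m = (\<lambda>i. if i < n then m 0 else 0)"
proof
  fix i show "m i = (if i < n then m 0 else 0)"
  proof (cases "i < n")
    case True
    then have "m i = m 0" using assms(2) by blast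
    with True show ?thesis by simp
  next
    case False
    then show ?thesis using assms(1) unfolding outputs_def by simp
  qed
qed

abbreviation cylinder :: "nat \<Rightarrow> nat \<Rightarrow> nat set \<Rightarrow> (nat \<Rightarrow> nat) \<Rightarrow> (nat \<Rightarrow> nat) set" where
  "cylinder n d J m0 \<equiv> {m\<in>outputs n d. \<forall>j<n. j \<notin> J \<longrightarrow> m j = m0 j}"

lemma cylinder_all_parties: "cylinder n d {..<n} m0 = outputs n d"
  by simp

definition linear_form :: "nat \<Rightarrow> (nat \<Rightarrow> int) \<Rightarrow> (nat \<Rightarrow> nat) \<Rightarrow> int" where
  "linear_form n z m = (\<Sum>j<n. z j * int (m j))"

lemma linear_form_upd:
  assumes "j < n"
  shows "linear_form n z (m(j := v)) = linear_form n z m + z j * (int v - int (m j))"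
proof -
  have "linear_form n z (m(j := v)) = (\<Sum>i<n. z i * int (m i) + (if i = j then z j * (int v - int (m j)) else 0))"
    unfolding linear_form_def by (intro sum.cong) (auto simp: algebra_simps)
  then show ?thesis using assms by (simp add: sum.distrib linear_form_def)
qed

lemma card_linear_form_residue:
  assumes d_pos: "d > 0" and j: "j \<in> J" "j < n" and cop: "coprime (z j) (int d)"
  shows "d * card {m \<in> cylinder n d J m0. linear_form n z m mod int d = k mod int d}
    = card (cylinder n d J m0)"
proof -
  define \<sigma> where "\<sigma> m = m(j := Suc (m j) mod d)" for m :: "nat \<Rightarrow> nat"
  have into: "\<sigma> ` cylinder n d J m0 \<subseteq> cylinder n d J m0"
    using j d_pos by (auto simp: \<sigma>_def outputs_def)
  have "inj_on \<sigma> (cylinder n d J m0)"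
  proof (rule inj_onI)
    fix m m' assume "m \<in> cylinder n d J m0" "m' \<in> cylinder n d J m0" and eq: "\<sigma> m = \<sigma> m'"
    then have "m j < d" "m' j < d" using j by (auto simp: outputs_def)
    moreover have "Suc (m j) mod d = Suc (m' j) mod d" using fun_cong[OF eq, of j] by (simp add: \<sigma>_def)
    ultimately have "m j = m' j" by (metis mod_less mod_Suc Suc_lessI nat.distinct(1) Suc_inject)
    then show "m = m'" using eq unfolding \<sigma>_def by (metis fun_upd_triv fun_upd_upd)
  qed
  moreover have "linear_form n z (\<sigma> m) mod int d = (linear_form n z m + z j) mod int d" for m
  proof -
    have "int (Suc (m j) mod d) mod int d = (int (m j) + 1) mod int d"
      by (metis int_ops(9) int_ops(2) int_ops(5) mod_mod_trivial Suc_eq_plus1)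
    then have "(z j * (int (Suc (m j) mod d) - int (m j))) mod int d = z j mod int d"
      by (metis add_diff_cancel_left' mod_diff_left_eq mod_mult_right_eq mult.right_neutral)
    then show ?thesis unfolding \<sigma>_def linear_form_upd[OF j(2)] by (metis mod_add_right_eq)
  qed
  moreover have "finite (cylinder n d J m0)" using finite_outputs[OF d_pos] by simp
  ultimately show ?thesis
    using card_residue_fibre_uniform[where \<sigma> = \<sigma> and w = "linear_form n z", OF _ into _ _ cop d_pos]
    by blast
qed

lemma linear_form_swap: "linear_form n (\<lambda>j. int (a j)) m = linear_form n (\<lambda>j. int (m j)) a"
  unfolding linear_form_def by (simp add: mult.commute)

lemma linear_form_diff_weights:
  "linear_form n (\<lambda>j. z j - z' j) a = linear_form n z a - linear_form n z' a"
  unfolding linear_form_def by (simp add: algebra_simps sum_subtractf)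

lemma linear_form_const_weights: "linear_form n (\<lambda>_. b) m = b * int (\<Sum>j<n. m j)"
  unfolding linear_form_def by (simp add: sum_distrib_left)

lemma card_forms_agreeing:
  assumes prime: "prime d" and m: "m \<in> outputs n d" and m0: "m0 \<in> outputs n d" and "m \<noteq> m0"
  shows "d * card {a\<in>outputs n d. linear_form n (\<lambda>j. int (a j)) m mod int d
                                  = linear_form n (\<lambda>j. int (a j)) m0 mod int d} = d ^ n"
proof -
  have "\<exists>j<n. m j \<noteq> m0 j"
  proof (rule ccontr)
    assume agree: "\<not> (\<exists>j<n. m j \<noteq> m0 j)"
    have "m = m0"
    proof
      fix i show "m i = m0 i" using agree m m0 unfolding outputs_def by (cases "i < n") auto
    qed
    with \<open>m \<noteq> m0\<close> show False ..
  qed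
  then obtain j where j: "j < n" "m j \<noteq> m0 j" by blast
  define z where "z j = int (m j) - int (m0 j)" for j
  have "m j < d" "m0 j < d" using m m0 j unfolding outputs_def by auto
  then have z_small: "\<bar>z j\<bar> < int d" and z_nonzero: "z j \<noteq> 0"
    using j unfolding z_def by auto
  have "\<not> int d dvd z j"
  proof
    assume "int d dvd z j"
    then have "\<bar>int d\<bar> \<le> \<bar>z j\<bar>" using dvd_imp_le_int z_nonzero by blast
    with z_small show False by simp
  qed
  moreover have "prime (int d)" using prime by simp
  ultimately have coprime: "coprime (z j) (int d)"
    using prime_imp_coprime coprime_commute by blast
  have "{a\<in>outputs n d. linear_form n (\<lambda>j. int (a j)) m mod int d
                       = linear_form n (\<lambda>j. int (a j)) m0 mod int d}
      = {a \<in> outputs n d. linear_form n z a mod int d = 0 mod int d}"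
    unfolding z_def linear_form_diff_weights linear_form_swap[of _ _ m] linear_form_swap[of _ _ m0]
    by (simp add: mod_eq_dvd_iff dvd_eq_mod_eq_0)
  moreover have "d * card {a \<in> cylinder n d {..<n} m0. linear_form n z a mod int d = 0 mod int d}
      = card (cylinder n d {..<n} m0)"
    using prime_gt_0_nat[OF prime] j(1) coprime by (intro card_linear_form_residue) auto
  ultimately show ?thesis by (simp only: cylinder_all_parties card_outputs)
qed

lemma card_cylinder_sum_residue:
  assumes d_pos: "d > 0" and j: "j \<in> J" "j < n" and k: "k < d"
  shows "d * card {m \<in> cylinder n d J m0. (\<Sum>i<n. m i) mod d = k} = card (cylinder n d J m0)"
proof -
  have "(\<Sum>i<n. m i) mod d = k \<longleftrightarrow> linear_form n (\<lambda>_. 1) m mod int d = int k mod int d" for m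
    using k unfolding linear_form_const_weights by (metis mod_less of_nat_eq_iff zmod_int mult_1)
  then have "{m \<in> cylinder n d J m0. (\<Sum>i<n. m i) mod d = k}
      = {m \<in> cylinder n d J m0. linear_form n (\<lambda>_. 1) m mod int d = int k mod int d}"
    by blast
  then show ?thesis using card_linear_form_residue[OF d_pos j, of "\<lambda>_. 1"] by simp
qed

lemma card_outputs_sum_residue:
  assumes "d > 0" "n \<ge> 1" "k < d"
  shows "card {m \<in> outputs n d. (\<Sum>i<n. m i) mod d = k} = d ^ (n - 1)"
proof -
  have "d * card {m \<in> cylinder n d {..<n} (\<lambda>_. 0). (\<Sum>i<n. m i) mod d = k} = card (cylinder n d {..<n} (\<lambda>_. 0))"
    using assms by (intro card_cylinder_sum_residue[of _ 0]) auto
  then have "d * card {m \<in> outputs n d. (\<Sum>i<n. m i) mod d = k} = d * d ^ (n - 1)"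
    using assms(2) by (simp only: cylinder_all_parties card_outputs) (simp add: power_eq_if)
  then show ?thesis using assms(1) by simp
qed

lemma card_cylinder_singleton:
  assumes "m \<in> outputs n d" "j < n"
  shows "card (cylinder n d {j} m) = d"
proof -
  have "cylinder n d {j} m = (\<lambda>k. m(j := k)) ` {..<d}"
  proof (intro equalityI subsetI)
    fix m' assume m': "m' \<in> cylinder n d {j} m"
    then have "m' = m(j := m' j)" "m' j < d"
      using assms unfolding outputs_def by (auto intro!: ext) (metis not_less)
    then show "m' \<in> (\<lambda>k. m(j := k)) ` {..<d}" by blast
  qed (use assms in \<open>auto simp: outputs_def\<close>)
  moreover have "inj_on (\<lambda>k. m(j := k)) {..<d}" by (rule inj_onI) (metis fun_upd_same)
  ultimately show ?thesis by (simp add: card_image)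
qed

lemma sum_cylinder_marginals:
  fixes P h :: "(nat \<Rightarrow> nat) \<Rightarrow> real"
  assumes d_pos: "d > 0" and j: "j < n"
    and h: "\<And>m m'. m \<in> outputs n d \<Longrightarrow> m' \<in> cylinder n d {j} m \<Longrightarrow> h m' = h m"
  shows "(\<Sum>m0\<in>outputs n d. h m0 * (\<Sum>m\<in>cylinder n d {j} m0. P m))
       = real d * (\<Sum>m\<in>outputs n d. P m * h m)"
proof -
  let ?O = "outputs n d"
  have fin: "finite ?O" by (rule finite_outputs[OF d_pos])
  have "(\<Sum>m0\<in>?O. h m0 * (\<Sum>m\<in>cylinder n d {j} m0. P m))
      = (\<Sum>m0\<in>?O. \<Sum>m\<in>cylinder n d {j} m0. P m * h m)"
    unfolding sum_distrib_left
  proof (intro sum.cong refl)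
    fix m0 m assume "m0 \<in> ?O" "m \<in> cylinder n d {j} m0"
    then have "h m = h m0" by (rule h)
    then show "h m0 * P m = P m * h m" by simp
  qed
  also have "\<dots> = (\<Sum>m\<in>?O. \<Sum>m0\<in>{m0\<in>?O. \<forall>i<n. i \<notin> {j} \<longrightarrow> m i = m0 i}. P m * h m)"
    by (rule sum.swap_restrict[OF fin fin])
  also have "\<dots> = (\<Sum>m\<in>?O. \<Sum>m0\<in>cylinder n d {j} m. P m * h m)"
    by (intro sum.cong refl arg_cong[where f = "sum _"]) auto
  also have "\<dots> = (\<Sum>m\<in>?O. real d * (P m * h m))"
    by (intro sum.cong refl) (simp only: sum_constant card_cylinder_singleton[OF _ j])
  finally show ?thesis by (simp add: sum_distrib_left)
qed

lemma non_signalling_expectation_eq: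
  fixes P :: "(nat \<Rightarrow> nat) \<Rightarrow> (nat \<Rightarrow> nat) \<Rightarrow> real" and h :: "(nat \<Rightarrow> nat) \<Rightarrow> real"
  assumes ns: "non_signalling n c d P" and d_pos: "d > 0"
    and s: "s \<in> inputs n c" and s': "s' \<in> inputs n c" and j: "j < n"
    and agree: "\<forall>i. i \<noteq> j \<longrightarrow> s i = s' i"
    and h: "\<And>m m'. m \<in> outputs n d \<Longrightarrow> m' \<in> cylinder n d {j} m \<Longrightarrow> h m' = h m"
  shows "(\<Sum>m\<in>outputs n d. P s m * h m) = (\<Sum>m\<in>outputs n d. P s' m * h m)"
proof -
  have "(\<Sum>m\<in>cylinder n d {j} m0. P s m) = (\<Sum>m\<in>cylinder n d {j} m0. P s' m)"
    if "m0 \<in> outputs n d" for m0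
  proof -
    have "{j} \<subseteq> {..<n}" using j by simp
    moreover have "\<forall>i<n. i \<notin> {j} \<longrightarrow> s i = s' i" using agree by simp
    ultimately show ?thesis using ns s s' that unfolding non_signalling_def by blast
  qed
  then have "(\<Sum>m0\<in>outputs n d. h m0 * (\<Sum>m\<in>cylinder n d {j} m0. P s m))
      = (\<Sum>m0\<in>outputs n d. h m0 * (\<Sum>m\<in>cylinder n d {j} m0. P s' m))"
    by (intro sum.cong refl) simp
  then have "real d * (\<Sum>m\<in>outputs n d. P s m * h m) = real d * (\<Sum>m\<in>outputs n d. P s' m * h m)"
    by (simp only: sum_cylinder_marginals[OF d_pos j h])
  then show ?thesis using d_pos by simp
qed

lemma inputs_upd: "s \<in> inputs n c \<Longrightarrow> j < n \<Longrightarrow> x < c j \<Longrightarrow> s(j := x) \<in> inputs n c"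
  unfolding inputs_def by auto

lemma eq_if_invariant_under_coordinate_changes:
  assumes step: "\<And>t t' j. t \<in> inputs n c \<Longrightarrow> t' \<in> inputs n c \<Longrightarrow> j < n \<Longrightarrow> j \<in> K \<Longrightarrow>
       \<forall>i. i \<noteq> j \<longrightarrow> t i = t' i \<Longrightarrow> g t = g t'"
    and s: "s \<in> inputs n c" and s': "s' \<in> inputs n c" and agree: "\<forall>i<n. i \<notin> K \<longrightarrow> s i = s' i"
  shows "g s = g s'"
proof -
  define t where "t k = (\<lambda>i. if i < k then s' i else s i)" for k
  have t_inputs: "t k \<in> inputs n c" for k using s s' unfolding t_def inputs_def by auto
  have "g s = g (t k)" if "k \<le> n" for k
    using that
  proof (induction k)
    case (Suc k)
    show ?case
    proof (cases "k \<in> K")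
      case True
      have "\<forall>i. i \<noteq> k \<longrightarrow> t k i = t (Suc k) i" unfolding t_def by auto
      then show ?thesis using Suc step[OF t_inputs t_inputs _ True] by simp
    next
      case False
      then have "t k = t (Suc k)" using agree Suc.prems unfolding t_def by (auto simp: less_Suc_eq)
      then show ?thesis using Suc by simp
    qed
  qed (simp add: t_def)
  moreover have "t n = s'" using s s' unfolding t_def inputs_def by auto
  ultimately show ?thesis by auto
qed

definition splice_on :: "nat set \<Rightarrow> (nat \<Rightarrow> nat) \<Rightarrow> (nat \<Rightarrow> nat) \<Rightarrow> nat \<Rightarrow> nat" where
  "splice_on J u t = (\<lambda>k. if k \<in> J then u k else t k)"

lemma splice_on_inputs: "u \<in> inputs n c \<Longrightarrow> t \<in> inputs n c \<Longrightarrow> splice_on J u t \<in> inputs n c"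
  unfolding splice_on_def inputs_def by auto

lemma splice_on_splice_on [simp]: "splice_on J (splice_on J u t) t' = splice_on J u t'"
  unfolding splice_on_def by auto

lemma splice_on_self [simp]: "splice_on J s s = s"
  unfolding splice_on_def by auto

locale mixed_differences_vanish =
  fixes n :: nat and c :: "nat \<Rightarrow> nat" and J :: "nat set" and q :: int
    and F :: "(nat \<Rightarrow> nat) \<Rightarrow> int"
  assumes J_parties: "J \<subseteq> {..<n}"
    and mixed: "\<And>b i j x y. b \<in> inputs n c \<Longrightarrow> i \<in> J \<Longrightarrow> j < n \<Longrightarrow> j \<notin> J \<Longrightarrow> x < c i \<Longrightarrow> y < c j \<Longrightarrow>
      (F (b(i := x, j := y)) - F (b(i := x))) mod q = (F (b(j := y)) - F b) mod q"
begin

lemma splice_increment_independent: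
  assumes u: "u \<in> inputs n c" and u': "u' \<in> inputs n c"
    and t: "t \<in> inputs n c" and t': "t' \<in> inputs n c" and j: "j < n" "j \<notin> J"
    and agree: "\<forall>k. k \<noteq> j \<longrightarrow> t k = t' k"
  shows "(F (splice_on J u t') - F (splice_on J u t)) mod q = (F (splice_on J u' t') - F (splice_on J u' t)) mod q"
proof -
  define g where "g u = (F (splice_on J u t') - F (splice_on J u t)) mod q" for u
  have "g u1 = g u2" if u1: "u1 \<in> inputs n c" and u2: "u2 \<in> inputs n c" and i: "i \<in> J"
    and agree_i: "\<forall>k. k \<noteq> i \<longrightarrow> u1 k = u2 k" for u1 u2 i
  proof -
    define b where "b = splice_on J u1 t"
    have "i < n" "u2 i < c i" "t' j < c j" using i J_parties u2 t' j unfolding inputs_def by auto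
    moreover have "splice_on J u2 t = b(i := u2 i)" "splice_on J u1 t' = b(j := t' j)"
      "splice_on J u2 t' = b(i := u2 i, j := t' j)"
      unfolding b_def splice_on_def using agree agree_i i j by (auto intro!: ext)
    ultimately show ?thesis
      unfolding g_def using mixed[of b i j "u2 i" "t' j"] splice_on_inputs[OF u1 t] i j
      by (simp add: b_def)
  qed
  then have "g (splice_on J u t) = g (splice_on J u' t)"
    by (rule eq_if_invariant_under_coordinate_changes[where g = g and K = J])
      (use splice_on_inputs u u' t in \<open>auto simp: splice_on_def\<close>)
  then show ?thesis unfolding g_def by simp
qed

lemma splice_decomposition:
  assumes s: "s \<in> inputs n c" and s0: "s0 \<in> inputs n c"
  shows "(F s - F (splice_on J s0 s)) mod q = (F (splice_on J s s0) - F s0) mod q"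
proof -
  define g where "g t = (F (splice_on J s t) - F (splice_on J s0 t)) mod q" for t
  have "g t = g t'" if t: "t \<in> inputs n c" and t': "t' \<in> inputs n c" and "j < n"
    and agree: "\<forall>k. k \<noteq> j \<longrightarrow> t k = t' k" for t t' j
  proof (cases "j \<in> J")
    case True
    then have "splice_on J u t = splice_on J u t'" for u
      unfolding splice_on_def fun_eq_iff using agree by auto
    then show ?thesis unfolding g_def by simp
  next
    case False
    then have "(F (splice_on J s t') - F (splice_on J s t)) mod q = (F (splice_on J s0 t') - F (splice_on J s0 t)) mod q"
      using splice_increment_independent[OF s s0 t t' \<open>j < n\<close> False agree] by simp
    then have "q dvd (F (splice_on J s t') - F (splice_on J s t)) - (F (splice_on J s0 t') - F (splice_on J s0 t))"
      by (simp only: mod_eq_dvd_iff)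
    moreover have "(F (splice_on J s t) - F (splice_on J s0 t)) - (F (splice_on J s t') - F (splice_on J s0 t'))
      = - ((F (splice_on J s t') - F (splice_on J s t)) - (F (splice_on J s0 t') - F (splice_on J s0 t)))"
      by simp
    ultimately show ?thesis unfolding g_def mod_eq_dvd_iff by (simp only: dvd_minus_iff)
  qed
  then have "g s = g s0"
    by (rule eq_if_invariant_under_coordinate_changes[where g = g and K = UNIV]) (use s s0 in auto)
  then show ?thesis unfolding g_def by simp
qed

end

lemma bipartite_linear_if_mixed_differences_vanish:
  assumes "mixed_differences_vanish n c J (int d) (\<lambda>s. int (f s))"
    and J: "J \<noteq> {}" "J \<subset> {..<n}" and s0: "s0 \<in> inputs n c"
    and f_range: "\<forall>s\<in>inputs n c. f s < d"
  shows "bipartite_linear n c d f"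
proof -
  interpret mixed_differences_vanish n c J "int d" "\<lambda>s. int (f s)" by fact
  have f_s0: "f s0 < d" using f_range s0 by auto
  define f1 where "f1 s = f (splice_on J s s0)" for s
  define f2 where "f2 s = (f (splice_on J s0 s) + d - f s0) mod d" for s
  have decomposition: "f s = (f1 s + f2 s) mod d" if s: "s \<in> inputs n c" for s
  proof -
    have "int ((f1 s + f2 s) mod d)
        = (int (f (splice_on J s s0)) + (int (f (splice_on J s0 s)) + int d) - int (f s0)) mod int d"
      using f_s0 unfolding f1_def f2_def by (simp add: zmod_int mod_add_right_eq of_nat_diff)
    also have "\<dots> = (int (f (splice_on J s s0)) - int (f s0) + int (f (splice_on J s0 s)) + int d) mod int d"
      by (simp add: algebra_simps)
    also have "\<dots> = (int (f (splice_on J s s0)) - int (f s0) + int (f (splice_on J s0 s))) mod int d"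
      by (rule mod_add_self2)
    also have "\<dots> = (int (f s) - int (f (splice_on J s0 s)) + int (f (splice_on J s0 s))) mod int d"
      by (rule mod_add_cong) (simp_all add: splice_decomposition[OF s s0])
    also have "\<dots> = int (f s)" using f_range s by simp
    finally show ?thesis by linarith
  qed
  have range: "f1 s < d \<and> f2 s < d" if "s \<in> inputs n c" for s
    using f_range splice_on_inputs[OF that s0] f_s0 unfolding f1_def f2_def by auto
  have f1_local: "f1 s = f1 s'" if "\<forall>j\<in>J. s j = s' j" for s s'
    unfolding f1_def splice_on_def using that by (intro arg_cong[where f = f] ext) auto
  have f2_local: "f2 s = f2 s'" if "s \<in> inputs n c" "s' \<in> inputs n c" "\<forall>j<n. j \<notin> J \<longrightarrow> s j = s' j" for s s'
  proof -
    have "splice_on J s0 s = splice_on J s0 s'"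
    proof
      fix k show "splice_on J s0 s k = splice_on J s0 s' k"
        using that by (cases "k < n") (auto simp: splice_on_def inputs_def)
    qed
    then show ?thesis unfolding f2_def by simp
  qed
  show ?thesis
    unfolding bipartite_linear_def
    by (intro exI[of _ J] exI[of _ f1] exI[of _ f2] conjI J ballI impI range decomposition f1_local f2_local)
      (simp_all add: range)
qed

locale delta_producing_ns =
  fixes n d :: nat and c :: "nat \<Rightarrow> nat" and f :: "(nat \<Rightarrow> nat) \<Rightarrow> nat"
    and Q :: "(nat \<Rightarrow> nat) \<Rightarrow> (nat \<Rightarrow> nat) \<Rightarrow> real"
  assumes prime_d: "prime d" and n_pos: "n \<ge> 1" and c_pos: "\<forall>j<n. c j \<ge> 1"
    and f_range: "\<forall>s\<in>inputs n c. f s < d"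
    and Q_NS: "Q \<in> NS n c d" and Q_delta: "produces_delta n c d f Q"
begin

lemma d_pos: "d > 0"
  using prime_d prime_gt_0_nat by simp

lemma finite_outputs_d: "finite (outputs n d)"
  using finite_outputs[OF d_pos] .

lemma Q_nonneg: "Q s m \<ge> 0"
  using Q_NS unfolding NS_def cond_dist_def by simp

lemma Q_outside: "s \<notin> inputs n c \<or> m \<notin> outputs n d \<Longrightarrow> Q s m = 0"
  using Q_NS unfolding NS_def cond_dist_def by simp

lemma Q_sum: "s \<in> inputs n c \<Longrightarrow> (\<Sum>m\<in>outputs n d. Q s m) = 1"
  using Q_NS unfolding NS_def cond_dist_def by simp

lemma Q_support:
  assumes s: "s \<in> inputs n c" and m: "m \<in> outputs n d" and "Q s m \<noteq> 0"
  shows "(\<Sum>j<n. m j) mod d = f s"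
proof (rule ccontr)
  let ?k = "(\<Sum>j<n. m j) mod d"
  assume "?k \<noteq> f s"
  then have "(\<Sum>m'\<in>{m'\<in>outputs n d. (\<Sum>j<n. m' j) mod d = ?k}. Q s m') = 0"
    using Q_delta s d_pos unfolding produces_delta_def correlator_def by simp
  then have "\<forall>m'\<in>{m'\<in>outputs n d. (\<Sum>j<n. m' j) mod d = ?k}. Q s m' = 0"
    using finite_outputs_d Q_nonneg by (simp add: sum_nonneg_eq_0_iff)
  then show False using m \<open>Q s m \<noteq> 0\<close> by simp
qed

definition form_prob :: "(nat \<Rightarrow> int) \<Rightarrow> (nat \<Rightarrow> nat) \<Rightarrow> int \<Rightarrow> real" where
  "form_prob a s u =
    (\<Sum>m\<in>outputs n d. Q s m * (if linear_form n a m mod int d = u mod int d then 1 else 0))"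

lemma form_prob_mod: "form_prob a s (u mod int d) = form_prob a s u"
  unfolding form_prob_def by simp

lemma sum_form_prob:
  assumes s: "s \<in> inputs n c"
  shows "(\<Sum>u<d. form_prob a s (int u)) = 1"
proof -
  have indicator_sum: "(\<Sum>u<d. if x mod int d = int u mod int d then 1 else 0 :: real) = 1" for x
  proof -
    have "(\<Sum>u<d. if x mod int d = int u mod int d then 1 else 0 :: real)
        = (\<Sum>u<d. if u = nat (x mod int d) then 1 else 0)"
      using d_pos by (intro sum.cong refl) auto
    also have "\<dots> = 1" using d_pos by (simp add: nat_less_iff)
    finally show ?thesis .
  qed
  have "(\<Sum>u<d. form_prob a s (int u))
      = (\<Sum>m\<in>outputs n d. Q s m * (\<Sum>u<d. if linear_form n a m mod int d = int u mod int d then 1 else 0))"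
    unfolding form_prob_def sum_distrib_left by (rule sum.swap)
  also have "\<dots> = 1" using Q_sum[OF s] by (simp only: indicator_sum mult_1_right)
  finally show ?thesis .
qed

(* On the support \<Sum>m = f t, so the weight of party j can be moved into the offset. *)
lemma form_prob_reduced_weights:
  assumes t: "t \<in> inputs n c"
  shows "(\<Sum>m\<in>outputs n d. Q t m * (if linear_form n (\<lambda>i. a i - a j) m mod int d = u mod int d then 1 else 0))
       = form_prob a t (u + a j * int (f t))"
  unfolding form_prob_def
proof (intro sum.cong refl)
  fix m assume m: "m \<in> outputs n d"
  show "Q t m * (if linear_form n (\<lambda>i. a i - a j) m mod int d = u mod int d then 1 else 0) =
        Q t m * (if linear_form n a m mod int d = (u + a j * int (f t)) mod int d then 1 else 0)"
  proof (cases "Q t m = 0")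
    case False
    then have "(\<Sum>i<n. m i) mod d = f t mod d"
      using Q_support[OF t m] by (metis mod_mod_trivial)
    then have "int (\<Sum>i<n. m i) mod int d = int (f t) mod int d"
      by (metis zmod_int)
    then have "(a j * int (\<Sum>i<n. m i)) mod int d = (a j * int (f t)) mod int d"
      by (metis mod_mult_right_eq)
    then have "int d dvd linear_form n a m - (linear_form n (\<lambda>i. a i - a j) m + a j * int (f t))"
      unfolding linear_form_diff_weights linear_form_const_weights mod_eq_dvd_iff
      by (simp add: algebra_simps)
    moreover have "linear_form n a m - (u + a j * int (f t))
      = (linear_form n a m - (linear_form n (\<lambda>i. a i - a j) m + a j * int (f t)))
        + (linear_form n (\<lambda>i. a i - a j) m - u)"
      by simp
    ultimately have "int d dvd linear_form n a m - (u + a j * int (f t))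
        \<longleftrightarrow> int d dvd linear_form n (\<lambda>i. a i - a j) m - u"
      by (metis dvd_add_right_iff)
    then show ?thesis by (simp only: mod_eq_dvd_iff)
  qed simp
qed

lemma form_prob_single_change:
  assumes s: "s \<in> inputs n c" and s': "s' \<in> inputs n c" and j: "j < n"
    and agree: "\<forall>i. i \<noteq> j \<longrightarrow> s i = s' i"
  shows "form_prob a s' v = form_prob a s (v - a j * (int (f s') - int (f s)))"
proof -
  define h where "h u m = (if linear_form n (\<lambda>i. a i - a j) m mod int d = u mod int d then 1 else 0 :: real)"
    for u m
  have blind_to_j: "h u m' = h u m" if "m \<in> outputs n d" "m' \<in> cylinder n d {j} m" for u m m'
  proof -
    have "linear_form n (\<lambda>i. a i - a j) m' = linear_form n (\<lambda>i. a i - a j) m"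
      unfolding linear_form_def using that by (intro sum.cong refl) auto
    then show ?thesis by (simp add: h_def)
  qed
  \<comment> \<open>The reduced form ignores the output of party j, so non-signalling in j applies.\<close>
  let ?u = "v - a j * int (f s')"
  have "form_prob a s' v = (\<Sum>m\<in>outputs n d. Q s' m * h ?u m)"
    using form_prob_reduced_weights[OF s', of a j ?u] by (simp add: h_def)
  also have "\<dots> = (\<Sum>m\<in>outputs n d. Q s m * h ?u m)"
    using non_signalling_expectation_eq[where P = Q and h = "h ?u", OF _ d_pos s s' j agree blind_to_j] Q_NS
    by (simp add: NS_def)
  also have "\<dots> = form_prob a s (?u + a j * int (f s))"
    using form_prob_reduced_weights[OF s, of a j ?u] by (simp add: h_def)
  also have "?u + a j * int (f s) = v - a j * (int (f s') - int (f s))"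
    by (simp add: algebra_simps)
  finally show ?thesis .
qed

definition form_uniform :: "(nat \<Rightarrow> int) \<Rightarrow> (nat \<Rightarrow> nat) \<Rightarrow> bool" where
  "form_uniform a s \<longleftrightarrow> (\<forall>u. form_prob a s u = form_prob a s 0)"

lemma form_uniform_single_change:
  assumes s: "s \<in> inputs n c" and s': "s' \<in> inputs n c" and j: "j < n"
    and agree: "\<forall>i. i \<noteq> j \<longrightarrow> s i = s' i"
  shows "form_uniform a s = form_uniform a s'"
proof -
  have "\<forall>i. i \<noteq> j \<longrightarrow> s' i = s i" using agree by simp
  then have "form_prob a s v = form_prob a s' (v - a j * (int (f s) - int (f s')))" for v
    by (rule form_prob_single_change[OF s' s j])
  moreover have "form_prob a s' v = form_prob a s (v - a j * (int (f s') - int (f s)))" for v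
    by (rule form_prob_single_change[OF s s' j agree])
  ultimately show ?thesis unfolding form_uniform_def by metis
qed

lemma form_uniform_all_inputs:
  assumes "s \<in> inputs n c" "s' \<in> inputs n c"
  shows "form_uniform a s = form_uniform a s'"
proof (rule eq_if_invariant_under_coordinate_changes[where g = "form_uniform a" and K = UNIV])
  fix t t' j assume "t \<in> inputs n c" "t' \<in> inputs n c" "j < n" "j \<in> UNIV" "\<forall>i. i \<noteq> j \<longrightarrow> t i = t' i"
  then show "form_uniform a t = form_uniform a t'" by (intro form_uniform_single_change)
qed (use assms in auto)

lemma form_uniform_if_translation_invariant:
  assumes "\<not> int d dvd cc" and invariant: "\<And>w. form_prob a s (w + cc) = form_prob a s w"
  shows "form_uniform a s"
proof -
  have "prime (int d)" using prime_d by simp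
  then have "coprime cc (int d)" using assms(1) prime_imp_coprime coprime_commute by blast
  then have "form_prob a s u = form_prob a s 0" for u
    by (rule periodic_shift_invariant_const[where g = "form_prob a s"]) (simp_all add: form_prob_mod invariant)
  then show ?thesis unfolding form_uniform_def by blast
qed

lemma mixed_difference_dvd:
  assumes b: "b \<in> inputs n c" and i: "i < n" and j: "j < n" and "i \<noteq> j"
    and x: "x < c i" and y: "y < c j"
    and non_uniform: "\<not> form_uniform a b" and separated: "\<not> int d dvd (a i - a j)"
  shows "int d dvd int (f (b(i := x, j := y))) - int (f (b(i := x))) - int (f (b(j := y))) + int (f b)"
proof -
  define F where "F s = int (f s)" for s
  define M where "M = F (b(i := x, j := y)) - F (b(i := x)) - F (b(j := y)) + F b"
  have bi: "b(i := x) \<in> inputs n c" and bj: "b(j := y) \<in> inputs n c"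
    and bij: "b(i := x, j := y) \<in> inputs n c"
    using inputs_upd b i j x y by auto
  have via_i: "form_prob a (b(i := x, j := y)) v
      = form_prob a b (v - a j * (F (b(i := x, j := y)) - F (b(i := x))) - a i * (F (b(i := x)) - F b))" for v
    using form_prob_single_change[OF bi bij j] form_prob_single_change[OF b bi i]
    by (simp add: F_def algebra_simps)
  have via_j: "form_prob a (b(i := x, j := y)) v
      = form_prob a b (v - a i * (F (b(i := x, j := y)) - F (b(j := y))) - a j * (F (b(j := y)) - F b))" for v
  proof -
    have "b(i := x, j := y) = b(j := y, i := x)" using \<open>i \<noteq> j\<close> by (rule fun_upd_twist)
    then show ?thesis
      using form_prob_single_change[OF bj bij i] form_prob_single_change[OF b bj j] \<open>i \<noteq> j\<close>
      by (simp add: F_def algebra_simps)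
  qed
  \<comment> \<open>Going around the square in both orders shows that the distribution of the form at b
    is invariant under translation by (a j - a i) M.\<close>
  have shift: "form_prob a b (w + (a j - a i) * M) = form_prob a b w" for w
  proof -
    define v where "v = w + a j * (F (b(i := x, j := y)) - F (b(i := x))) + a i * (F (b(i := x)) - F b)"
    have "form_prob a b w = form_prob a (b(i := x, j := y)) v"
      unfolding via_i v_def by (simp add: algebra_simps)
    also have "\<dots> = form_prob a b (w + (a j - a i) * M)"
      unfolding via_j v_def M_def by (simp add: algebra_simps)
    finally show ?thesis by simp
  qed
  have "int d dvd (a j - a i) * M"
    using form_uniform_if_translation_invariant[OF _ shift] non_uniform by blast
  moreover have "\<not> int d dvd (a j - a i)" using separated by (metis dvd_minus_iff minus_diff_eq)
  moreover have "prime (int d)" using prime_d by simp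
  ultimately have "int d dvd M" using prime_dvd_mult_iff by blast
  then show ?thesis unfolding M_def F_def .
qed

lemma bipartite_linear_if_not_uniform:
  assumes i0: "i0 < n" and separated: "\<not> int d dvd (a i0 - a 0)"
    and s1: "s1 \<in> inputs n c" and non_uniform: "\<not> form_uniform a s1"
  shows "bipartite_linear n c d f"
proof -
  define J where "J = {j. j < n \<and> int d dvd (a j - a 0)}"
  have J_parties: "J \<subseteq> {..<n}" unfolding J_def by auto
  have "mixed_differences_vanish n c J (int d) (\<lambda>s. int (f s))"
  proof (unfold_locales)
    fix b i j x y assume b: "b \<in> inputs n c" and "i \<in> J" "j < n" "j \<notin> J" "x < c i" "y < c j"
    then have "i < n" "i \<noteq> j" unfolding J_def by auto
    moreover have "\<not> int d dvd (a i - a j)"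
    proof
      assume "int d dvd (a i - a j)"
      moreover have "int d dvd (a i - a 0)" using \<open>i \<in> J\<close> unfolding J_def by simp
      ultimately have "int d dvd (a i - a 0) - (a i - a j)" by (rule dvd_diff[rotated])
      then have "int d dvd (a j - a 0)" by simp
      then show False using \<open>j < n\<close> \<open>j \<notin> J\<close> unfolding J_def by simp
    qed
    moreover have "\<not> form_uniform a b" using form_uniform_all_inputs[OF s1 b] non_uniform by simp
    ultimately have "int d dvd int (f (b(i := x, j := y))) - int (f (b(i := x))) - int (f (b(j := y))) + int (f b)"
      using mixed_difference_dvd[OF b] \<open>j < n\<close> \<open>x < c i\<close> \<open>y < c j\<close> by blast
    then show "(int (f (b(i := x, j := y))) - int (f (b(i := x)))) mod int d
        = (int (f (b(j := y))) - int (f b)) mod int d"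
      by (simp add: mod_eq_dvd_iff algebra_simps)
  qed (rule J_parties)
  moreover have "0 \<in> J" "i0 \<notin> J" using n_pos i0 separated unfolding J_def by auto
  then have "J \<noteq> {}" "J \<subset> {..<n}" using J_parties i0 by auto
  moreover have "(\<lambda>_. 0) \<in> inputs n c" using c_pos unfolding inputs_def by auto
  ultimately show ?thesis using bipartite_linear_if_mixed_differences_vanish f_range by blast
qed

lemma form_prob_uniform:
  assumes not_bl: "\<not> bipartite_linear n c d f"
    and i0: "i0 < n" and separated: "\<not> int d dvd (a i0 - a 0)" and s: "s \<in> inputs n c"
  shows "form_prob a s u = 1 / real d"
proof -
  have uniform: "form_prob a s v = form_prob a s 0" for v
    using bipartite_linear_if_not_uniform[OF i0 separated s] not_bl unfolding form_uniform_def by blast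
  have "1 = (\<Sum>v<d. form_prob a s (int v))" using sum_form_prob[OF s] by simp
  also have "\<dots> = (\<Sum>v<d. form_prob a s 0)" by (intro sum.cong refl uniform)
  finally have "form_prob a s 0 = 1 / real d" using d_pos by (simp add: field_simps)
  then show ?thesis using uniform[of u] by simp
qed

lemma form_prob_constant_weights:
  assumes s: "s \<in> inputs n c" and m0: "m0 \<in> outputs n d" and m0_sum: "(\<Sum>j<n. m0 j) mod d = f s"
    and constant_weights: "\<forall>j<n. a j = b"
  shows "form_prob a s (linear_form n a m0) = 1"
proof -
  have form: "linear_form n a m = b * int (\<Sum>j<n. m j)" for m
    unfolding linear_form_def using constant_weights by (simp add: sum_distrib_left)
  have "form_prob a s (linear_form n a m0) = (\<Sum>m\<in>outputs n d. Q s m)"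
    unfolding form_prob_def
  proof (intro sum.cong refl)
    fix m assume m: "m \<in> outputs n d"
    show "Q s m * (if linear_form n a m mod int d = linear_form n a m0 mod int d then 1 else 0) = Q s m"
    proof (cases "Q s m = 0")
      case False
      then have "(\<Sum>j<n. m j) mod d = (\<Sum>j<n. m0 j) mod d" using Q_support[OF s m] m0_sum by simp
      then have "int (\<Sum>j<n. m j) mod int d = int (\<Sum>j<n. m0 j) mod int d" by (metis zmod_int)
      then have "linear_form n a m mod int d = linear_form n a m0 mod int d"
        unfolding form by (metis mod_mult_right_eq)
      then show ?thesis by simp
    qed simp
  qed
  then show ?thesis using Q_sum[OF s] by simp
qed

lemma sum_form_prob_over_weights:
  assumes s: "s \<in> inputs n c" and m0: "m0 \<in> outputs n d"
  shows "(\<Sum>a\<in>outputs n d. form_prob (\<lambda>j. int (a j)) s (linear_form n (\<lambda>j. int (a j)) m0))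
       = Q s m0 * real d ^ n + (1 - Q s m0) * real d ^ (n - 1)"
proof -
  let ?O = "outputs n d"
  define agreeing where "agreeing m = {a\<in>?O. linear_form n (\<lambda>j. int (a j)) m mod int d
                                              = linear_form n (\<lambda>j. int (a j)) m0 mod int d}" for m
  have card_agreeing: "card (agreeing m) = (if m = m0 then d ^ n else d ^ (n - 1))" if "m \<in> ?O" for m
  proof (cases "m = m0")
    case False
    then have "d * card (agreeing m) = d * d ^ (n - 1)"
      using card_forms_agreeing[OF prime_d that m0] n_pos unfolding agreeing_def
      by (simp add: power_eq_if)
    then show ?thesis using False d_pos by simp
  qed (simp add: agreeing_def card_outputs)
  have "(\<Sum>a\<in>?O. form_prob (\<lambda>j. int (a j)) s (linear_form n (\<lambda>j. int (a j)) m0))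
      = (\<Sum>m\<in>?O. Q s m * real (card (agreeing m)))"
    unfolding form_prob_def sum_distrib_left[symmetric] agreeing_def
    by (subst sum.swap) (simp add: sum_distrib_left[symmetric] sum.If_cases[OF finite_outputs_d] Int_def)
  also have "\<dots> = Q s m0 * real d ^ n + (\<Sum>m\<in>?O - {m0}. Q s m * real d ^ (n - 1))"
    using card_agreeing by (simp add: sum.remove[OF finite_outputs_d m0])
  also have "(\<Sum>m\<in>?O - {m0}. Q s m * real d ^ (n - 1)) = (1 - Q s m0) * real d ^ (n - 1)"
    using sum.remove[OF finite_outputs_d m0, of "Q s"] Q_sum[OF s] by (simp add: sum_distrib_right[symmetric])
  finally show ?thesis .
qed

lemma form_prob_nonconstant_weights:
  assumes not_bl: "\<not> bipartite_linear n c d f" and s: "s \<in> inputs n c"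
    and a: "a \<in> outputs n d" and i0: "i0 < n" "a i0 \<noteq> a 0"
  shows "form_prob (\<lambda>j. int (a j)) s u = 1 / real d"
proof -
  have "a i0 < d" "a 0 < d" using a i0 n_pos unfolding outputs_def by auto
  then have small: "\<bar>int (a i0) - int (a 0)\<bar> < int d" by auto
  have "\<not> int d dvd (int (a i0) - int (a 0))"
  proof
    assume "int d dvd (int (a i0) - int (a 0))"
    moreover have "int (a i0) - int (a 0) \<noteq> 0" using i0(2) by simp
    ultimately have "\<bar>int d\<bar> \<le> \<bar>int (a i0) - int (a 0)\<bar>" by (intro dvd_imp_le_int)
    with small show False by simp
  qed
  then show ?thesis using form_prob_uniform[OF not_bl i0(1) _ s] by simp
qed

lemma sum_form_prob_over_weights_not_bipartite_linear:
  assumes not_bl: "\<not> bipartite_linear n c d f"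
    and s: "s \<in> inputs n c" and m0: "m0 \<in> outputs n d" and m0_sum: "(\<Sum>j<n. m0 j) mod d = f s"
  shows "(\<Sum>a\<in>outputs n d. form_prob (\<lambda>j. int (a j)) s (linear_form n (\<lambda>j. int (a j)) m0))
       = real d + real (d ^ n - d) / real d"
proof -
  let ?O = "outputs n d"
  let ?X = "\<lambda>a. form_prob (\<lambda>j. int (a j)) s (linear_form n (\<lambda>j. int (a j)) m0)"
  define C where "C = (\<lambda>t i. if i < n then t else (0::nat)) ` {..<d}"
  have C_outputs: "C \<subseteq> ?O" unfolding C_def outputs_def by auto
  have "inj_on (\<lambda>t i. if i < n then t else (0::nat)) {..<d}"
  proof (rule inj_onI)
    fix t t' assume "(\<lambda>i. if i < n then t else (0::nat)) = (\<lambda>i. if i < n then t' else 0)"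
    from fun_cong[OF this, of 0] show "t = t'" using n_pos by simp
  qed
  then have card_C: "card C = d" by (simp add: C_def card_image)
  have "?X a = 1" if a: "a \<in> C" for a
  proof -
    obtain t where "a = (\<lambda>i. if i < n then t else 0)" using a unfolding C_def by blast
    then show ?thesis by (intro form_prob_constant_weights[OF s m0 m0_sum, where b = "int t"]) simp
  qed
  moreover have "?X a = 1 / real d" if a: "a \<in> ?O - C" for a
  proof -
    have "\<exists>i0<n. a i0 \<noteq> a 0"
    proof (rule ccontr)
      assume "\<not> (\<exists>i0<n. a i0 \<noteq> a 0)"
      then have "a = (\<lambda>i. if i < n then a 0 else 0)"
        using a output_eq_constant[of a n d] by blast
      moreover have "a 0 < d" using a n_pos unfolding outputs_def by auto
      ultimately have "a \<in> C" unfolding C_def by blast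
      then show False using a by simp
    qed
    then show ?thesis using form_prob_nonconstant_weights[OF not_bl s] a by blast
  qed
  ultimately have "(\<Sum>a\<in>?O. ?X a) = real d + real (card (?O - C)) / real d"
    using sum.subset_diff[OF C_outputs finite_outputs_d, of ?X] card_C by simp
  also have "card (?O - C) = d ^ n - d"
    using card_Diff_subset[OF finite_subset[OF C_outputs finite_outputs_d] C_outputs] card_C card_outputs
    by simp
  finally show ?thesis .
qed

lemma Q_on_support:
  assumes not_bl: "\<not> bipartite_linear n c d f"
    and s: "s \<in> inputs n c" and m0: "m0 \<in> outputs n d" and m0_sum: "(\<Sum>j<n. m0 j) mod d = f s"
  shows "Q s m0 = 1 / real d ^ (n - 1)"
proof -
  have "Q s m0 * real d ^ n + (1 - Q s m0) * real d ^ (n - 1) = real d + real (d ^ n - d) / real d"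
    using sum_form_prob_over_weights[OF s m0] sum_form_prob_over_weights_not_bipartite_linear[OF assms]
    by simp
  moreover have d_power: "real d ^ n = real d * real d ^ (n - 1)"
    using n_pos by (simp add: power_eq_if)
  moreover have "real (d ^ n - d) / real d = real d ^ (n - 1) - 1"
  proof -
    have "d \<le> d ^ n" using n_pos d_pos by (simp add: self_le_power)
    then have "real (d ^ n - d) = real d * (real d ^ (n - 1) - 1)"
      using d_power by (simp add: of_nat_diff algebra_simps)
    then show ?thesis using d_pos by simp
  qed
  ultimately have "(Q s m0 * real d ^ (n - 1)) * (real d - 1) = 1 * (real d - 1)"
    by (simp add: algebra_simps)
  moreover have "real d - 1 \<noteq> 0" using prime_ge_2_nat[OF prime_d] by simp
  ultimately have "Q s m0 * real d ^ (n - 1) = 1" by simp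
  then show ?thesis using d_pos by (simp add: field_simps)
qed

lemma Q_eq_uniform_distribution:
  assumes not_bl: "\<not> bipartite_linear n c d f" and s: "s \<in> inputs n c" and m: "m \<in> outputs n d"
  shows "Q s m = (if (\<Sum>j<n. m j) mod d = f s then 1 / real d ^ (n - 1) else 0)"
  using Q_on_support[OF not_bl s m] Q_support[OF s m] by auto

end

definition uniform_on_sum ::
  "nat \<Rightarrow> (nat \<Rightarrow> nat) \<Rightarrow> nat \<Rightarrow> ((nat \<Rightarrow> nat) \<Rightarrow> nat) \<Rightarrow> (nat \<Rightarrow> nat) \<Rightarrow> (nat \<Rightarrow> nat) \<Rightarrow> real"
where
  "uniform_on_sum n c d f s m =
    (if s \<in> inputs n c \<and> m \<in> outputs n d \<and> (\<Sum>j<n. m j) mod d = f s then 1 / real d ^ (n - 1) else 0)"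

lemma sum_uniform_on_sum:
  assumes s: "s \<in> inputs n c" and A: "A \<subseteq> outputs n d" and d_pos: "d > 0"
  shows "(\<Sum>m\<in>A. uniform_on_sum n c d f s m)
    = real (card {m\<in>A. (\<Sum>j<n. m j) mod d = f s}) / real d ^ (n - 1)"
proof -
  have fin: "finite A" using finite_subset[OF A finite_outputs[OF d_pos]] .
  have "(\<Sum>m\<in>A. uniform_on_sum n c d f s m)
      = (\<Sum>m\<in>A. if (\<Sum>j<n. m j) mod d = f s then 1 / real d ^ (n - 1) else 0)"
    using s A by (intro sum.cong refl) (auto simp: uniform_on_sum_def)
  also have "\<dots> = real (card {m\<in>A. (\<Sum>j<n. m j) mod d = f s}) / real d ^ (n - 1)"
    by (simp add: sum.If_cases[OF fin] Int_def)
  finally show ?thesis .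
qed

lemma uniform_on_sum_cond_dist:
  assumes d_pos: "d > 0" and n_pos: "n \<ge> 1" and f_range: "\<forall>s\<in>inputs n c. f s < d"
  shows "cond_dist n c d (uniform_on_sum n c d f)"
  unfolding cond_dist_def
proof (intro conjI allI impI ballI)
  fix s assume s: "s \<in> inputs n c"
  show "(\<Sum>m\<in>outputs n d. uniform_on_sum n c d f s m) = 1"
    using card_outputs_sum_residue[OF d_pos n_pos] f_range s d_pos
    by (simp add: sum_uniform_on_sum[OF s order_refl d_pos])
qed (auto simp: uniform_on_sum_def)

lemma uniform_on_sum_non_signalling:
  assumes d_pos: "d > 0" and f_range: "\<forall>s\<in>inputs n c. f s < d"
  shows "non_signalling n c d (uniform_on_sum n c d f)"
  unfolding non_signalling_def
proof (intro allI impI ballI)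
  fix J s s' m0
  assume J: "J \<subseteq> {..<n}" and s: "s \<in> inputs n c" and s': "s' \<in> inputs n c"
    and agree: "\<forall>j<n. j \<notin> J \<longrightarrow> s j = s' j"
  show "(\<Sum>m\<in>cylinder n d J m0. uniform_on_sum n c d f s m) = (\<Sum>m\<in>cylinder n d J m0. uniform_on_sum n c d f s' m)"
  proof (cases "J = {}")
    case True
    have "s = s'"
    proof
      fix i show "s i = s' i" using agree s s' True unfolding inputs_def by (cases "i < n") auto
    qed
    then show ?thesis by simp
  next
    case False
    then obtain j where j: "j \<in> J" "j < n" using J by blast
    \<comment> \<open>Each residue of the output sum is equally frequent on the cylinder, so the marginal
      does not depend on the input.\<close>
    have "card {m \<in> cylinder n d J m0. (\<Sum>i<n. m i) mod d = f t} = card (cylinder n d J m0) div d"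
      if "t \<in> inputs n c" for t
    proof -
      have uniform: "d * card {m \<in> cylinder n d J m0. (\<Sum>i<n. m i) mod d = f t} = card (cylinder n d J m0)"
        using f_range that by (intro card_cylinder_sum_residue[OF d_pos j]) auto
      show ?thesis using d_pos by (simp flip: uniform)
    qed
    moreover have "(\<Sum>m\<in>cylinder n d J m0. uniform_on_sum n c d f t m)
        = real (card {m \<in> cylinder n d J m0. (\<Sum>i<n. m i) mod d = f t}) / real d ^ (n - 1)"
      if "t \<in> inputs n c" for t
      by (rule sum_uniform_on_sum[OF that _ d_pos]) auto
    ultimately show ?thesis using s s' by simp
  qed
qed

lemma uniform_on_sum_produces_delta:
  assumes d_pos: "d > 0" and n_pos: "n \<ge> 1" and f_range: "\<forall>s\<in>inputs n c. f s < d"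
  shows "produces_delta n c d f (uniform_on_sum n c d f)"
  unfolding produces_delta_def correlator_def
proof (intro ballI allI impI)
  fix s k assume s: "s \<in> inputs n c" and k: "k < d"
  let ?A = "{m \<in> outputs n d. (\<Sum>j<n. m j) mod d = k}"
  have "(\<Sum>m\<in>?A. uniform_on_sum n c d f s m)
      = real (card {m \<in> ?A. (\<Sum>j<n. m j) mod d = f s}) / real d ^ (n - 1)"
    by (rule sum_uniform_on_sum[OF s _ d_pos]) auto
  also have "\<dots> = (if k = f s then 1 else 0)"
  proof (cases "k = f s")
    case True
    then have "{m \<in> ?A. (\<Sum>j<n. m j) mod d = f s} = ?A" by auto
    then show ?thesis using True card_outputs_sum_residue[OF d_pos n_pos k] d_pos by simp
  next
    case False
    then have "{m \<in> ?A. (\<Sum>j<n. m j) mod d = f s} = {}" by auto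
    then show ?thesis using False by (simp only: card.empty) simp
  qed
  finally show "(\<Sum>m\<in>?A. uniform_on_sum n c d f s m) = (if k = f s then 1 else 0)" .
qed

lemma convex_combination_of_unit_interval_extreme:
  fixes t x y e :: real
  assumes "0 < t" "t < 1" "0 \<le> x" "x \<le> 1" "0 \<le> y" "y \<le> 1" "e = 0 \<or> e = 1"
    and "t * x + (1 - t) * y = e"
  shows "x = e"
proof -
  have "t * x \<le> t" "(1 - t) * y \<le> 1 - t" "0 \<le> t * x" "0 \<le> (1 - t) * y"
    using assms by (simp_all add: mult_left_le)
  moreover have "t * x < t" if "x < 1" using assms that by simp
  moreover have "0 < t * x" if "0 < x" using assms that by simp
  ultimately show ?thesis using assms by (smt (verit))
qed

lemma correlator_bounds:
  assumes Q: "cond_dist n c d Q" and s: "s \<in> inputs n c"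
  shows "0 \<le> correlator n d Q s k" "correlator n d Q s k \<le> 1"
proof -
  have total: "(\<Sum>m\<in>outputs n d. Q s m) = 1" and nonneg: "\<And>m. Q s m \<ge> 0"
    using Q s unfolding cond_dist_def by auto
  then have "finite (outputs n d)" by (metis sum.infinite zero_neq_one)
  then show "correlator n d Q s k \<le> 1"
    unfolding correlator_def using sum_mono2[of "outputs n d" _ "Q s"] nonneg total by auto
  show "0 \<le> correlator n d Q s k" unfolding correlator_def by (rule sum_nonneg) (use nonneg in auto)
qed

lemma produces_delta_mixture_component:
  assumes Q: "cond_dist n c d Q" and R: "cond_dist n c d R" and P: "produces_delta n c d f P"
    and mixture: "P = (\<lambda>s m. t * Q s m + (1 - t) * R s m)" and "0 < t" "t < 1"
  shows "produces_delta n c d f Q"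
  unfolding produces_delta_def
proof (intro ballI allI impI)
  fix s k assume s: "s \<in> inputs n c" and "k < d"
  have "correlator n d P s k = t * correlator n d Q s k + (1 - t) * correlator n d R s k"
    unfolding correlator_def mixture by (simp add: sum.distrib sum_distrib_left)
  moreover have "correlator n d P s k = (if k = f s then 1 else 0)"
    using P s \<open>k < d\<close> unfolding produces_delta_def by auto
  ultimately have "t * correlator n d Q s k + (1 - t) * correlator n d R s k = (if k = f s then 1 else 0)"
    by simp
  moreover have "(if k = f s then 1 else 0) = (0::real) \<or> (if k = f s then 1 else 0) = (1::real)"
    by simp
  ultimately show "correlator n d Q s k = (if k = f s then 1 else 0)"
    using convex_combination_of_unit_interval_extreme[OF \<open>0 < t\<close> \<open>t < 1\<close>
        correlator_bounds[OF Q s] correlator_bounds[OF R s]]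
    by blast
qed

lemma vertex_if_unique_delta_producer:
  assumes P: "P \<in> NS n c d" "produces_delta n c d f P"
    and unique: "\<And>Q. Q \<in> NS n c d \<Longrightarrow> produces_delta n c d f Q \<Longrightarrow> Q = P"
  shows "vertex_of P (NS n c d)"
  unfolding vertex_of_def
proof (intro conjI ballI allI impI P(1))
  fix Q R t assume Q: "Q \<in> NS n c d" and R: "R \<in> NS n c d"
    and mixture: "0 < t \<and> t < 1 \<and> P = (\<lambda>s m. t * Q s m + (1 - t) * R s m)"
  have Q_dist: "cond_dist n c d Q" and R_dist: "cond_dist n c d R" using Q R unfolding NS_def by auto
  have swapped: "P = (\<lambda>s m. (1 - t) * R s m + (1 - (1 - t)) * Q s m)"
    using mixture by (auto simp: add.commute)
  have "produces_delta n c d f Q"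
    by (rule produces_delta_mixture_component[OF Q_dist R_dist P(2)]) (use mixture in auto)
  moreover have "produces_delta n c d f R"
    by (rule produces_delta_mixture_component[OF R_dist Q_dist P(2) swapped]) (use mixture in auto)
  ultimately show "Q = R" using unique Q R by metis
qed

lemma unique_ns_delta_producer:
  assumes "n \<ge> 1" "\<forall>j<n. c j \<ge> 1" "prime d" "\<forall>s\<in>inputs n c. f s < d"
    and not_bl: "\<not> bipartite_linear n c d f"
    and "Q \<in> NS n c d" "produces_delta n c d f Q"
  shows "Q = uniform_on_sum n c d f"
proof -
  interpret delta_producing_ns n d c f Q by unfold_locales (use assms in auto)
  show ?thesis
  proof (intro ext)
    fix s m show "Q s m = uniform_on_sum n c d f s m"
    proof (cases "s \<in> inputs n c \<and> m \<in> outputs n d")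
      case True
      then show ?thesis using Q_eq_uniform_distribution[OF not_bl] by (simp add: uniform_on_sum_def)
    next
      case False
      then show ?thesis using Q_outside by (auto simp: uniform_on_sum_def)
    qed
  qed
qed

theorem proposition2p3p2:
  fixes n d :: nat and c :: "nat \<Rightarrow> nat" and f :: "(nat \<Rightarrow> nat) \<Rightarrow> nat"
  assumes "n \<ge> 2"
    and "\<forall>j<n. c j \<ge> 1"
    and "prime d"
    and "\<forall>s\<in>inputs n c. f s < d"
    and "\<not> bipartite_linear n c d f"
  shows "\<exists>P. P \<in> NS n c d \<and> produces_delta n c d f P \<and>
             (\<forall>Q. Q \<in> NS n c d \<and> produces_delta n c d f Q \<longrightarrow> Q = P) \<and>
             vertex_of P (NS n c d)"
proof -
  have n_pos: "n \<ge> 1" and d_pos: "d > 0" using assms(1,3) prime_gt_0_nat by auto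
  let ?P = "uniform_on_sum n c d f"
  have P_NS: "?P \<in> NS n c d"
    unfolding NS_def using uniform_on_sum_cond_dist[OF d_pos n_pos assms(4)]
      uniform_on_sum_non_signalling[OF d_pos assms(4)] by simp
  moreover have P_delta: "produces_delta n c d f ?P"
    by (rule uniform_on_sum_produces_delta[OF d_pos n_pos assms(4)])
  moreover have unique: "Q = ?P" if "Q \<in> NS n c d" "produces_delta n c d f Q" for Q
    by (rule unique_ns_delta_producer[OF n_pos assms(2-5) that])
  moreover have "vertex_of ?P (NS n c d)"
    using P_NS P_delta unique by (rule vertex_if_unique_delta_producer)
  ultimately show ?thesis by blast
qed

end
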